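(* For every (closed) term $P$, $$[\![P]\!] = \{ s \in \Sigma^* \mid \exists M.\ P \overset{s}{\Rightarrow} M \text{ and } M \text{ is not doomed} \}.$$
   Context: Fix a set $\Sigma$ of events. Terms: $P, Q ::= \mathit{STOP} \mid \mathit{FAIL} \mid ?x{:}E \rightarrow P \mid P \,\Box\, Q \mid P \parallel_E Q$, where an event set $E$ is $f(y_1,\dots,y_n)$ with $f : \Sigma^n \to 2^\Sigma$ computable and each $y_i$ an event variable or event; $x$ is bound in $P$ in $?x{:}E\rightarrow P$. Terms are closed, so each $E$ denotes a subset of $\Sigma$; $[e/x]P$ is substitution of event $e$ for $x$. Trace semantics. A trace set is a prefix-closed subset of $\Sigma^*$ (possibly empty); $\varepsilon$ is the empty trace. For a trace set $T$: $eT := \{\varepsilon\} \cup \{et \mid t \in T\}$, $T(e) := \{t \mid et \in T\}$. For $E \subseteq \Sigma$, $\parallel_E$ on trace sets is the unique function with $\varnothing \parallel_E T = T \parallel_E \varnothing = \varnothing$ and, for nonempty $T_1, T_2$, $T_1 \parallel_E T_2 = \bigcup_{e \in E} e(T_1(e) \parallel_E T_2(e)) \cup \bigcup_{e \in \Sigma\setminus E}( e(T_1(e) \parallel_E T_2) \cup e(T_1 \parallel_E T_2(e)))$. The semantics: $[\![\mathit{STOP}]\!] = \{\varepsilon\}$, $[\![\mathit{FAIL}]\!] = \varnothing$, $[\![?x{:}E \rightarrow P]\!] = \{\varepsilon\} \cup \bigcup_{e \in E} e[\![ [e/x]P ]\!]$, $[\![P \Box Q]\!] = [\![P]\!] \cup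 [\![Q]\!]$, $[\![P \parallel_E Q]\!] = [\![P]\!] \parallel_E [\![Q]\!]$. Operational semantics. Actions $a ::= e \mid \tau$, $\tau \notin \Sigma$. Doomed terms: $D ::= \mathit{FAIL} \mid D \Box D \mid D \parallel_E P \mid P \parallel_E D$; viable terms $\hat P, \hat Q$ are non-doomed terms. The internal transition relation $\xrightarrow{a}$ is the least relation closed under: (1) $e \in E \Rightarrow (?x{:}E \rightarrow P) \xrightarrow{e} [e/x]P$; (2) $P \xrightarrow{\tau} P' \Rightarrow P \Box Q \xrightarrow{\tau} P' \Box Q$; (3) $Q \xrightarrow{\tau} Q' \Rightarrow P \Box Q \xrightarrow{\tau} P \Box Q'$; (4) $P \xrightarrow{e} P' \Rightarrow P \Box Q \xrightarrow{e} P'$; (5) $Q \xrightarrow{e} Q' \Rightarrow P \Box Q \xrightarrow{e} Q'$; (6) $P \xrightarrow{a} P'$, $a \notin E$, $\hat Q$ viable $\Rightarrow P \parallel_E \hat Q \xrightarrow{a} P' \parallel_E \hat Q$; (7) $Q \xrightarrow{a} Q'$, $a \notin E$, $\hat P$ viable $\Rightarrow \hat P \parallel_E Q \xrightarrow{a} \hat P \parallel_E Q'$; (8) $\hat P, \hat Q$ viable, $\hat P \xrightarrow{e} P'$, $\hat Q \xrightarrow{e} Q'$, $e \in E$ $\Rightarrow \hat P \parallel_E \hat Q \xrightarrow{e} P' \parallel_E Q'$; (9) $D_1, D_2$ doomed, $D_1 \xrightarrow{\tau} P_1 \Rightarrow D_1 \parallel_E D_2 \xrightarrow{\tau} P_1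 \parallel_E D_2$; (10) $D_1, D_2$ doomed, $D_2 \xrightarrow{\tau} P_2 \Rightarrow D_1 \parallel_E D_2 \xrightarrow{\tau} D_1 \parallel_E P_2$; (11) $\mathit{FAIL} \Box \mathit{FAIL} \xrightarrow{\tau} \mathit{FAIL}$; (12) $\mathit{FAIL} \parallel_E P \xrightarrow{\tau} \mathit{FAIL}$; (13) $P \parallel_E \mathit{FAIL} \xrightarrow{\tau} \mathit{FAIL}$. For $s \in \Sigma^*$, the visible transition $P \overset{s}{\Rightarrow} Q$ holds iff there is a finite sequence (possibly of length zero) of internal transitions $P = P_0 \xrightarrow{a_1} P_1 \cdots \xrightarrow{a_n} P_n = Q$ such that deleting all $\tau$'s from $a_1 \cdots a_n$ yields $s$. *)

theory Defs
  imports Main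
begin

text \<open>Events range over an arbitrary (nonempty) type 'e, playing the role of Sigma.
  Event variables are named by strings.\<close>

datatype 'e atom = AEv 'e | AVar string

text \<open>An event set f(y1,...,yn): a function from event tuples (lists) to sets of events,
  applied to a list of atoms (events or event variables).\<close>
datatype 'e eset = ESet "'e list \<Rightarrow> 'e set" "'e atom list"

datatype 'e proc =
    STOP
  | FAIL
  | Pre string "'e eset" "'e proc"          \<comment> \<open>?x:E \<rightarrow> P, x bound in P\<close>
  | Ext "'e proc" "'e proc"
  | Par "'e proc" "'e eset" "'e proc"

fun fv_atom :: "'e atom \<Rightarrow> string set" where
  "fv_atom (AEv e) = {}"
| "fv_atom (AVar y) = {y}"

fun fv_eset :: "'e eset \<Rightarrow> string set" where
  "fv_eset (ESet f ys) = (\<Union>y\<in>set ys. fv_atom y)"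

fun fv :: "'e proc \<Rightarrow> string set" where
  "fv STOP = {}"
| "fv FAIL = {}"
| "fv (Pre x E P) = fv_eset E \<union> (fv P - {x})"
| "fv (Ext P Q) = fv P \<union> fv Q"
| "fv (Par P E Q) = fv P \<union> fv_eset E \<union> fv Q"

definition closed :: "'e proc \<Rightarrow> bool" where
  "closed P \<longleftrightarrow> fv P = {}"

fun subst_atom :: "'e \<Rightarrow> string \<Rightarrow> 'e atom \<Rightarrow> 'e atom" where
  "subst_atom e x (AEv d) = AEv d"
| "subst_atom e x (AVar y) = (if y = x then AEv e else AVar y)"

fun subst_eset :: "'e \<Rightarrow> string \<Rightarrow> 'e eset \<Rightarrow> 'e eset" where
  "subst_eset e x (ESet f ys) = ESet f (map (subst_atom e x) ys)"

text \<open>[e/x]P (capture is impossible since e is a closed event).\<close>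
fun subst :: "'e \<Rightarrow> string \<Rightarrow> 'e proc \<Rightarrow> 'e proc" where
  "subst e x STOP = STOP"
| "subst e x FAIL = FAIL"
| "subst e x (Pre y E P) = Pre y (subst_eset e x E) (if y = x then P else subst e x P)"
| "subst e x (Ext P Q) = Ext (subst e x P) (subst e x Q)"
| "subst e x (Par P E Q) = Par (subst e x P) (subst_eset e x E) (subst e x Q)"

fun psize :: "'e proc \<Rightarrow> nat" where
  "psize STOP = 0"
| "psize FAIL = 0"
| "psize (Pre x E P) = Suc (psize P)"
| "psize (Ext P Q) = Suc (psize P + psize Q)"
| "psize (Par P E Q) = Suc (psize P + psize Q)"

lemma psize_subst[simp]: "psize (subst e x P) = psize P"
  by (induction P) auto

text \<open>Denotation of an event set (meaningful for closed event sets; variables are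
  mapped to an unspecified event, which never happens for closed terms).\<close>
fun atom_val :: "'e atom \<Rightarrow> 'e" where
  "atom_val (AEv e) = e"
| "atom_val (AVar y) = undefined"

fun eset_val :: "'e eset \<Rightarrow> 'e set" where
  "eset_val (ESet f ys) = f (map atom_val ys)"

type_synonym 'e traceset = "'e list set"

definition prefixT :: "'e \<Rightarrow> 'e traceset \<Rightarrow> 'e traceset" where
  "prefixT e T = insert [] ((\<lambda>t. e # t) ` T)"

definition afterT :: "'e traceset \<Rightarrow> 'e \<Rightarrow> 'e traceset" where
  "afterT T e = {t. e # t \<in> T}"

fun par_mem :: "'e set \<Rightarrow> 'e list \<Rightarrow> 'e traceset \<Rightarrow> 'e traceset \<Rightarrow> bool" where
  "par_mem E [] T1 T2 = (T1 \<noteq> {} \<and> T2 \<noteq> {})"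
| "par_mem E (e # t) T1 T2 = (T1 \<noteq> {} \<and> T2 \<noteq> {} \<and>
     (if e \<in> E then par_mem E t (afterT T1 e) (afterT T2 e)
      else par_mem E t (afterT T1 e) T2 \<or> par_mem E t T1 (afterT T2 e)))"

definition parT :: "'e traceset \<Rightarrow> 'e set \<Rightarrow> 'e traceset \<Rightarrow> 'e traceset" where
  "parT T1 E T2 = {s. par_mem E s T1 T2}"

text \<open>Sanity check: parT satisfies the defining equations of the paper.\<close>
lemma parT_empty1: "parT {} E T = {}" and parT_empty2: "parT T E {} = {}"
proof -
  have "\<not> par_mem E s {} T" for s by (cases s) auto
  moreover have "\<not> par_mem E s T {}" for s by (cases s) auto
  ultimately show "parT {} E T = {}" "parT T E {} = {}" by (auto simp: parT_def)
qed

lemma parT_eq: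
  fixes E :: "'e set"
  assumes "T1 \<noteq> {}" "T2 \<noteq> {}"
  shows "parT T1 E T2 =
    (\<Union>e\<in>E. prefixT e (parT (afterT T1 e) E (afterT T2 e))) \<union>
    (\<Union>e\<in>UNIV - E. prefixT e (parT (afterT T1 e) E T2) \<union> prefixT e (parT T1 E (afterT T2 e)))"
  (is "?L = ?R")
proof
  show "?L \<subseteq> ?R"
  proof
    fix s assume "s \<in> ?L"
    then show "s \<in> ?R"
    proof (cases s)
      case Nil
      obtain e :: 'e where True by simp
      then show ?thesis using Nil \<open>s \<in> ?L\<close>
        by (cases "e \<in> E") (auto simp: prefixT_def parT_def)
    next
      case (Cons e t)
      then show ?thesis using \<open>s \<in> ?L\<close>
        by (cases "e \<in> E") (auto simp: prefixT_def parT_def)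
    qed
  qed
next
  show "?R \<subseteq> ?L"
    using assms by (auto simp: prefixT_def parT_def)
qed

function sem :: "'e proc \<Rightarrow> 'e traceset" where
  "sem STOP = {[]}"
| "sem FAIL = {}"
| "sem (Pre x E P) = insert [] (\<Union>e\<in>eset_val E. prefixT e (sem (subst e x P)))"
| "sem (Ext P Q) = sem P \<union> sem Q"
| "sem (Par P E Q) = parT (sem P) (eset_val E) (sem Q)"
  by pat_completeness auto
termination by (relation "measure psize") auto

datatype 'e act = Tau | Vis 'e

definition act_in :: "'e act \<Rightarrow> 'e set \<Rightarrow> bool" where
  "act_in a E = (case a of Tau \<Rightarrow> False | Vis e \<Rightarrow> e \<in> E)"

inductive doomed :: "'e proc \<Rightarrow> bool" where
  "doomed FAIL"
| "doomed D1 \<Longrightarrow> doomed D2 \<Longrightarrow> doomed (Ext D1 D2)"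
| "doomed D \<Longrightarrow> doomed (Par D E P)"
| "doomed D \<Longrightarrow> doomed (Par P E D)"

abbreviation viable :: "'e proc \<Rightarrow> bool" where
  "viable P \<equiv> \<not> doomed P"

inductive step :: "'e proc \<Rightarrow> 'e act \<Rightarrow> 'e proc \<Rightarrow> bool" where
  s1: "e \<in> eset_val E \<Longrightarrow> step (Pre x E P) (Vis e) (subst e x P)"
| s2: "step P Tau P' \<Longrightarrow> step (Ext P Q) Tau (Ext P' Q)"
| s3: "step Q Tau Q' \<Longrightarrow> step (Ext P Q) Tau (Ext P Q')"
| s4: "step P (Vis e) P' \<Longrightarrow> step (Ext P Q) (Vis e) P'"
| s5: "step Q (Vis e) Q' \<Longrightarrow> step (Ext P Q) (Vis e) Q'"
| s6: "step P a P' \<Longrightarrow> \<not> act_in a (eset_val E) \<Longrightarrow> viable Q \<Longrightarrow>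
       step (Par P E Q) a (Par P' E Q)"
| s7: "step Q a Q' \<Longrightarrow> \<not> act_in a (eset_val E) \<Longrightarrow> viable P \<Longrightarrow>
       step (Par P E Q) a (Par P E Q')"
| s8: "viable P \<Longrightarrow> viable Q \<Longrightarrow> step P (Vis e) P' \<Longrightarrow> step Q (Vis e) Q' \<Longrightarrow>
       e \<in> eset_val E \<Longrightarrow> step (Par P E Q) (Vis e) (Par P' E Q')"
| s9: "doomed D1 \<Longrightarrow> doomed D2 \<Longrightarrow> step D1 Tau P1 \<Longrightarrow>
       step (Par D1 E D2) Tau (Par P1 E D2)"
| s10: "doomed D1 \<Longrightarrow> doomed D2 \<Longrightarrow> step D2 Tau P2 \<Longrightarrow>
       step (Par D1 E D2) Tau (Par D1 E P2)"
| s11: "step (Ext FAIL FAIL) Tau FAIL"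
| s12: "step (Par FAIL E P) Tau FAIL"
| s13: "step (Par P E FAIL) Tau FAIL"

inductive weak :: "'e proc \<Rightarrow> 'e list \<Rightarrow> 'e proc \<Rightarrow> bool" where
  weak_refl: "weak P [] P"
| weak_tau: "step P Tau P' \<Longrightarrow> weak P' s Q \<Longrightarrow> weak P s Q"
| weak_vis: "step P (Vis e) P' \<Longrightarrow> weak P' s Q \<Longrightarrow> weak P (e # s) Q"

end

theory Submission
  imports Defs
begin

text \<open>Viable terms are exactly those with a nonempty trace set. A tau step preserves
  the trace set and a visible step e leads into the traces after e, which gives soundness.
  Conversely, every trace e # t of P is realised by a single e step to some P' with t as a
  trace; for parallel composition this holds because the traces after e of each component
  are covered by its e-successors, and parT is monotone and distributes over unions.\<close>

lemma par_mem_nonempty: "par_mem E t A B \<Longrightarrow> A \<noteq> {} \<and> B \<noteq> {}"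
  by (cases t) auto

lemma par_mem_commute: "par_mem E t A B = par_mem E t B A"
  by (induction t arbitrary: A B) auto

lemma parT_commute: "parT A E B = parT B E A"
  by (simp add: parT_def par_mem_commute)

lemma afterT_mono: "A \<subseteq> A' \<Longrightarrow> afterT A e \<subseteq> afterT A' e"
  by (auto simp: afterT_def)

lemma afterT_UN: "afterT (\<Union>i\<in>I. A i) e = (\<Union>i\<in>I. afterT (A i) e)"
  by (auto simp: afterT_def)

lemma par_mem_mono:
  "A \<subseteq> A' \<Longrightarrow> B \<subseteq> B' \<Longrightarrow> par_mem E t A B \<Longrightarrow> par_mem E t A' B'"
proof (induction t arbitrary: A B A' B')
  case (Cons e t)
  have after: "afterT A e \<subseteq> afterT A' e" "afterT B e \<subseteq> afterT B' e"
    using Cons.prems(1,2) by (simp_all add: afterT_mono)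
  have "A' \<noteq> {}" "B' \<noteq> {}"
    using Cons.prems by auto
  with Cons.prems(3) show ?case
    using Cons.IH[OF after] Cons.IH[OF after(1) Cons.prems(2)] Cons.IH[OF Cons.prems(1) after(2)]
    by (auto split: if_splits)
qed auto

lemma parT_mono: "A \<subseteq> A' \<Longrightarrow> B \<subseteq> B' \<Longrightarrow> parT A E B \<subseteq> parT A' E B'"
  unfolding parT_def using par_mem_mono by blast

lemma par_mem_UN_left:
  "par_mem E t (\<Union>i\<in>I. A i) B \<Longrightarrow> \<exists>i\<in>I. par_mem E t (A i) B"
proof (induction t arbitrary: A B)
  case (Cons e t)
  have after_nonempty: "A i \<noteq> {}" if "par_mem E t (afterT (A i) e) B'" for i B'
    using par_mem_nonempty[OF that] by (auto simp: afterT_def)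
  have "B \<noteq> {}" using Cons.prems by simp
  show ?case
  proof (cases "e \<in> E")
    case True
    with Cons.prems have "par_mem E t (\<Union>i\<in>I. afterT (A i) e) (afterT B e)"
      by (simp add: afterT_UN)
    then obtain i where i: "i \<in> I" "par_mem E t (afterT (A i) e) (afterT B e)"
      using Cons.IH[of "\<lambda>i. afterT (A i) e"] by blast
    have "par_mem E (e # t) (A i) B"
      using True \<open>B \<noteq> {}\<close> after_nonempty[OF i(2)] i(2) by simp
    with i(1) show ?thesis ..
  next
    case False
    with Cons.prems have "par_mem E t (\<Union>i\<in>I. afterT (A i) e) B \<or>
        par_mem E t (\<Union>i\<in>I. A i) (afterT B e)"
      by (simp add: afterT_UN)
    then obtain i where i: "i \<in> I"
      "par_mem E t (afterT (A i) e) B \<or> par_mem E t (A i) (afterT B e)"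
      using Cons.IH[of "\<lambda>i. afterT (A i) e" B] Cons.IH[of A "afterT B e"] by blast
    moreover from i(2) have "A i \<noteq> {}"
      using after_nonempty par_mem_nonempty by blast
    ultimately have "par_mem E (e # t) (A i) B"
      using False \<open>B \<noteq> {}\<close> by simp
    with i(1) show ?thesis ..
  qed
qed simp

lemma parT_UN_left: "parT (\<Union>i\<in>I. A i) E B \<subseteq> (\<Union>i\<in>I. parT (A i) E B)"
  by (auto simp: parT_def dest: par_mem_UN_left)

lemma parT_UN_right: "parT A E (\<Union>j\<in>J. B j) \<subseteq> (\<Union>j\<in>J. parT A E (B j))"
  using parT_UN_left[where A = B and B = A] by (simp add: parT_commute)

lemma afterT_parT:
  "afterT (parT A E B) e \<subseteq>
    (if e \<in> E then parT (afterT A e) E (afterT B e)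
     else parT (afterT A e) E B \<union> parT A E (afterT B e))"
  by (auto simp: afterT_def parT_def)

lemma parT_afterT_sync:
  "e \<in> E \<Longrightarrow> parT (afterT A e) E (afterT B e) \<subseteq> afterT (parT A E B) e"
  by (auto simp: afterT_def parT_def dest: par_mem_nonempty)

lemma parT_afterT_left:
  "e \<notin> E \<Longrightarrow> parT (afterT A e) E B \<subseteq> afterT (parT A E B) e"
  by (auto simp: afterT_def parT_def dest: par_mem_nonempty)

lemma doomed_iff_sem_empty: "doomed P \<longleftrightarrow> sem P = {}"
proof
  show "doomed P \<Longrightarrow> sem P = {}"
    by (induction rule: doomed.induct) (auto simp: parT_empty1 parT_empty2)
  show "sem P = {} \<Longrightarrow> doomed P"
  proof (induction P)
    case (Par P E Q)
    then have "[] \<notin> parT (sem P) (eset_val E) (sem Q)" by simp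
    with Par.IH show ?case by (auto simp: parT_def intro: doomed.intros)
  qed (auto intro: doomed.intros)
qed

lemma Nil_in_sem: "sem P \<noteq> {} \<Longrightarrow> [] \<in> sem P"
  by (induction P) (auto simp: parT_def dest: par_mem_nonempty)

definition act_after :: "'e traceset \<Rightarrow> 'e act \<Rightarrow> 'e traceset" where
  "act_after T a = (case a of Tau \<Rightarrow> T | Vis e \<Rightarrow> afterT T e)"

lemma parT_act_after_left:
  "\<not> act_in a E \<Longrightarrow> parT (act_after A a) E B \<subseteq> act_after (parT A E B) a"
  by (cases a) (auto simp: act_after_def act_in_def dest: parT_afterT_left)

lemma parT_act_after_right:
  "\<not> act_in a E \<Longrightarrow> parT A E (act_after B a) \<subseteq> act_after (parT A E B) a"
  using parT_act_after_left[where A = B and B = A] by (simp add: parT_commute)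

lemma step_sem_subset: "step P a P' \<Longrightarrow> sem P' \<subseteq> act_after (sem P) a"
proof (induction rule: step.induct)
  case (s6 P a P' E Q)
  then show ?case
    using order_trans[OF parT_mono[OF s6.IH order_refl] parT_act_after_left[OF s6.hyps(2)]]
    by simp
next
  case (s7 Q a Q' E P)
  then show ?case
    using order_trans[OF parT_mono[OF order_refl s7.IH] parT_act_after_right[OF s7.hyps(2)]]
    by simp
next
  case (s8 P Q e P' Q' E)
  then show ?case
    using order_trans[OF parT_mono[OF s8.IH[unfolded act_after_def, simplified]]
        parT_afterT_sync[OF s8.hyps(5)]]
    by (simp add: act_after_def)
qed (auto simp: act_after_def prefixT_def afterT_def parT_empty1 parT_empty2 doomed_iff_sem_empty)

lemma weak_sound: "weak P s M \<Longrightarrow> \<not> doomed M \<Longrightarrow> s \<in> sem P"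
proof (induction rule: weak.induct)
  case (weak_refl P)
  then show ?case by (simp add: doomed_iff_sem_empty Nil_in_sem)
next
  case (weak_tau P P' s Q)
  then show ?case using step_sem_subset[of P Tau P'] by (auto simp: act_after_def)
next
  case (weak_vis P e P' s Q)
  then show ?case using step_sem_subset[of P "Vis e" P'] by (auto simp: act_after_def afterT_def)
qed

lemma afterT_sem_subset_successors:
  "afterT (sem P) e \<subseteq> (\<Union>P'\<in>{P'. step P (Vis e) P'}. sem P')"
proof (induction P)
  case (Pre x E P)
  then show ?case by (auto simp: afterT_def prefixT_def intro: s1)
next
  case (Ext P Q)
  have "afterT (sem (Ext P Q)) e = afterT (sem P) e \<union> afterT (sem Q) e"
    by (auto simp: afterT_def)
  also have "\<dots> \<subseteq> (\<Union>P'\<in>{P'. step P (Vis e) P'}. sem P') \<union> (\<Union>Q'\<in>{Q'. step Q (Vis e) Q'}. sem Q')"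
    using Ext.IH by (rule Un_mono)
  also have "\<dots> \<subseteq> (\<Union>R\<in>{R. step (Ext P Q) (Vis e) R}. sem R)"
    by (auto intro: s4 s5)
  finally show ?case .
next
  case (Par P E Q)
  let ?succs = "\<lambda>R. {R'. step R (Vis e) R'}"
  let ?E = "eset_val E"
  show ?case
  proof
    fix t assume t: "t \<in> afterT (sem (Par P E Q)) e"
    then have "sem P \<noteq> {}" "sem Q \<noteq> {}"
      by (auto simp: afterT_def parT_def dest: par_mem_nonempty)
    then have viable: "\<not> doomed P" "\<not> doomed Q"
      by (simp_all add: doomed_iff_sem_empty)
    show "t \<in> (\<Union>R\<in>?succs (Par P E Q). sem R)"
    proof (cases "e \<in> ?E")
      case True
      with t have "t \<in> parT (afterT (sem P) e) ?E (afterT (sem Q) e)"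
        using afterT_parT[of "sem P" ?E "sem Q" e] by auto
      also have "\<dots> \<subseteq> parT (\<Union>P'\<in>?succs P. sem P') ?E (\<Union>Q'\<in>?succs Q. sem Q')"
        by (rule parT_mono[OF Par.IH])
      also have "\<dots> \<subseteq> (\<Union>P'\<in>?succs P. \<Union>Q'\<in>?succs Q. sem (Par P' E Q'))"
        using order_trans[OF parT_UN_left UN_mono[OF order_refl parT_UN_right]] by simp
      also have "\<dots> \<subseteq> (\<Union>R\<in>?succs (Par P E Q). sem R)"
        using s8[OF viable _ _ True] by blast
      finally show ?thesis .
    next
      case False
      then have interleaved: "\<not> act_in (Vis e) ?E" by (simp add: act_in_def)
      from False t have "t \<in> parT (afterT (sem P) e) ?E (sem Q) \<union> parT (sem P) ?E (afterT (sem Q) e)"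
        using afterT_parT[of "sem P" ?E "sem Q" e] by auto
      also have "\<dots> \<subseteq> parT (\<Union>P'\<in>?succs P. sem P') ?E (sem Q) \<union>
          parT (sem P) ?E (\<Union>Q'\<in>?succs Q. sem Q')"
        using Un_mono[OF parT_mono[OF Par.IH(1) order_refl] parT_mono[OF order_refl Par.IH(2)]]
        by simp
      also have "\<dots> \<subseteq> (\<Union>P'\<in>?succs P. sem (Par P' E Q)) \<union> (\<Union>Q'\<in>?succs Q. sem (Par P E Q'))"
        using Un_mono[OF parT_UN_left parT_UN_right] by simp
      also have "\<dots> \<subseteq> (\<Union>R\<in>?succs (Par P E Q). sem R)"
        using s6[OF _ interleaved viable(2)] s7[OF _ interleaved viable(1)] by blast
      finally show ?thesis .
    qed
  qed
qed (auto simp: afterT_def)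

lemma sem_weak_complete: "s \<in> sem P \<Longrightarrow> \<exists>M. weak P s M \<and> \<not> doomed M"
proof (induction s arbitrary: P)
  case Nil
  then show ?case by (auto simp: doomed_iff_sem_empty intro: weak_refl)
next
  case (Cons e t)
  then obtain P' where "step P (Vis e) P'" "t \<in> sem P'"
    using afterT_sem_subset_successors[of P e] by (auto simp: afterT_def)
  with Cons.IH show ?case by (blast intro: weak_vis)
qed

theorem theorem1:
  fixes P :: "'e proc"
  assumes "closed P"
  shows "sem P = {s. \<exists>M. weak P s M \<and> \<not> doomed M}"
  using weak_sound sem_weak_complete by blast

end
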